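(* Let $\mathcal{H}^1_{\mathrm{TT}}=(C,F^1,D,G)$ be a two-timescale system satisfying the Hybrid Basic Conditions, and let $(\Phi,\{H_k\}_{k=1}^\infty)$, with $H_k=(h_{s,k},h_{f,k})$, be a two-timescale asymptotic simulation of $\mathcal{H}^1_{\mathrm{TT}}$. Then $(\Phi,\{h_{f,k}\}_{k=1}^\infty)$ is an asymptotic simulation of the boundary layer system $\mathcal{H}_{\mathrm{BL}}=(C,\widetilde F,D,G)$, where $\widetilde F(x):=\{0\}\times F_f(x)$.
   Context: Hybrid inclusions. A hybrid inclusion $\mathcal H=(C,F,D,G)$ on $\mathbb R^n$ consists of sets $C,D\subset\mathbb R^n$ and set-valued maps $F,G:\mathbb R^n\rightrightarrows\mathbb R^n$, representing the dynamics $x\in C,\ \dot x\in F(x)$ and $x\in D,\ x^+\in G(x)$. $\mathcal H$ satisfies the Hybrid Basic Conditions if $C,D$ are closed; $F,G$ are outer semicontinuous and locally bounded; $F(x)$ is nonempty and convex for every $x\in C$; $G(x)$ is nonempty for every $x\in D$. Define $F_C(x):=F(x)$ if $x\in C$ and $F_C(x):=\emptyset$ otherwise, and $G_D(x):=G(x)$ if $x\in D$ and $\emptyset$ otherwise; thus $\mathrm{gph}(F_C)=\mathrm{gph}(F)\cap(C\times\mathbb R^n)$ and $\mathrm{gph}(G_D)=\mathrm{gph}(G)\cap(D\times\mathbb R^n)$. Hybrid sequences. A compact hybrid sequence domain is a set $E=\bigcup_{j=0}^{J-1}(\{k_j,\dots,k_{j+1}\}\times\{j\})\subset\mathbb Z_{\ge0}^2$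 with $J\in\mathbb N$ and integers $0=k_0\le k_1\le\dots\le k_J$; a hybrid sequence domain is the union of a nondecreasing sequence of compact hybrid sequence domains; a hybrid sequence is a map $\phi$ whose domain $\mathrm{dom}\,\phi$ is a hybrid sequence domain. It is complete if its domain is unbounded, complete in the $k$-direction if the set of $k$'s occurring in its domain is unbounded, and complete in the $j$-direction if the set of $j$'s occurring is unbounded. Set $\bar\jmath_k:=\inf\{j\in\mathbb Z_{\ge0}:(k+1,j)\in\mathrm{dom}\,\phi\}$ and $\bar k_j:=\inf\{k\in\mathbb Z_{\ge0}:(k,j+1)\in\mathrm{dom}\,\phi\}$ ($\inf\emptyset=\infty$). The $\limsup$ of a sequence of points denotes its outer limit, i.e. the set of all its accumulation points. Asymptotic simulations. A sequence $\{h_k\}_{k=1}^\infty$ is admissible if $h_k>0$ for all $k$, $h_k\to0$, and $\sum_k h_k=\infty$; set $\tau_k:=\sum_{i=0}^{k-1}h_{i+1}$ ($k\in\mathbb Z_{\ge0}$) and $m(t):=\max\{k\in\mathbb Z_{\ge0}:\tau_k\le t\}$. A pair $(\phi,\{h_k\})$ is an asymptotic simulation of $\mathcal H=(C,F,D,G)$ if $\phi$ is a bounded complete hybrid sequence in $\mathbb R^n$, $\{h_k\}$ is admissible, and: (1) if $\phi$ is complete in the $k$-direction, there is a bounded sequence $\{f_k\}_{k=0}^\infty\subset\mathbb R^n$ with $\limsup_{k\to\infty}(\phi(k,\bar\jmath_k),f_k)\subset\mathrm{gph}(F_C)$ and, with $\hat f_{k+1}:=(\phi(k+1,\bar\jmath_k)-\phi(k,\bar\jmath_k))/h_{k+1}$,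 for every $T>0$: $\lim_{n\to\infty}\sup_{n+1\le k\le m(\tau_n+T)}\big|\sum_{i=n}^{k-1}h_{i+1}(\hat f_{i+1}-f_i)\big|=0$; (2) if $\phi$ is complete in the $j$-direction, $\limsup_{j\to\infty}(\phi(\bar k_j,j),\phi(\bar k_j,j+1))\subset\mathrm{gph}(G_D)$. Two-timescale setting. Let $n=n_s+n_f$ and write $x=(x_s,x_f)\in\mathbb R^{n_s}\times\mathbb R^{n_f}$. The two-timescale system $\mathcal H^1_{\mathrm{TT}}=(C,F^1,D,G)$ has $C,D\subset\mathbb R^n$, $F_s:\mathbb R^n\rightrightarrows\mathbb R^{n_s}$, $F_f:\mathbb R^n\rightrightarrows\mathbb R^{n_f}$, $F^1(x):=F_s(x_s,x_f)\times F_f(x_s,x_f)$, and $G:\mathbb R^n\rightrightarrows\mathbb R^n$. A sequence $\{H_k\}_{k=1}^\infty$, $H_k=(h_{s,k},h_{f,k})\in\mathbb R^2_{>0}$, is two-timescale admissible if $\{h_{s,k}\}$ and $\{h_{f,k}\}$ are each admissible and $\lim_{k\to\infty}h_{s,k}/h_{f,k}=0$. For $r\in\{s,f\}$ set $\tau_{r,k}:=\sum_{i=0}^{k-1}h_{r,i+1}$, $m_r(t):=\max\{k\in\mathbb Z_{\ge0}:\tau_{r,k}\le t\}$, and $\mathcal I_{r,n,T}:=\{k\in\mathbb Z_{\ge0}:n+1\le k\le m_r(\tau_{r,n}+T)\}$. A pair $(\Phi,\{H_k\})$ is a two-timescale asymptotic simulation of $\mathcal H^1_{\mathrm{TT}}$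 if $\Phi=(\phi_s,\phi_f)$ is a bounded complete hybrid sequence in $\mathbb R^n$, $\{H_k\}$ is two-timescale admissible, and: (1) if $\Phi$ is complete in the $k$-direction, there is a bounded sequence $f_k=(f_{s,k},f_{f,k})\in\mathbb R^{n_s}\times\mathbb R^{n_f}$, $k\ge0$, with $\limsup_{k\to\infty}(\Phi(k,\bar\jmath_k),f_k)\subset\mathrm{gph}(F^1_C)$ and, with $\hat f_{r,k+1}:=(\phi_r(k+1,\bar\jmath_k)-\phi_r(k,\bar\jmath_k))/h_{r,k+1}$, for every $T>0$ and each $r\in\{s,f\}$: $\lim_{n\to\infty}\sup_{k\in\mathcal I_{r,n,T}}\big|\sum_{i=n}^{k-1}h_{r,i+1}(\hat f_{r,i+1}-f_{r,i})\big|=0$; (2) if $\Phi$ is complete in the $j$-direction, $\limsup_{j\to\infty}(\Phi(\bar k_j,j),\Phi(\bar k_j,j+1))\subset\mathrm{gph}(G_D)$. *)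

theory Defs
  imports "HOL-Analysis.Analysis"
begin

definition gph_restr :: "'v set \<Rightarrow> ('v \<Rightarrow> 'w set) \<Rightarrow> ('v \<times> 'w) set" where
  "gph_restr C F = {(x, y). x \<in> C \<and> y \<in> F x}"

definition outer_semicontinuous :: "('v::metric_space \<Rightarrow> 'w::metric_space set) \<Rightarrow> bool" where
  "outer_semicontinuous F \<longleftrightarrow>
     (\<forall>x y (xs :: nat \<Rightarrow> 'v) (ys :: nat \<Rightarrow> 'w).
        xs \<longlonglongrightarrow> x \<longrightarrow> ys \<longlonglongrightarrow> y \<longrightarrow> (\<forall>i. ys i \<in> F (xs i)) \<longrightarrow> y \<in> F x)"

definition locally_bounded_map :: "('v::metric_space \<Rightarrow> 'w::metric_space set) \<Rightarrow> bool" where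
  "locally_bounded_map F \<longleftrightarrow> (\<forall>x. \<exists>U. open U \<and> x \<in> U \<and> bounded (\<Union> (F ` U)))"

definition hybrid_basic_conditions ::
  "'v::euclidean_space set \<Rightarrow> ('v \<Rightarrow> 'v set) \<Rightarrow> 'v set \<Rightarrow> ('v \<Rightarrow> 'v set) \<Rightarrow> bool" where
  "hybrid_basic_conditions C F D G \<longleftrightarrow>
     closed C \<and> closed D \<and>
     outer_semicontinuous F \<and> locally_bounded_map F \<and>
     outer_semicontinuous G \<and> locally_bounded_map G \<and>
     (\<forall>x\<in>C. F x \<noteq> {} \<and> convex (F x)) \<and>
     (\<forall>x\<in>D. G x \<noteq> {})"

definition compact_hs_domain :: "(nat \<times> nat) set \<Rightarrow> bool" where
  "compact_hs_domain E \<longleftrightarrow>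
     (\<exists>J::nat. \<exists>k::nat \<Rightarrow> nat. J \<ge> 1 \<and> k 0 = 0 \<and> (\<forall>j<J. k j \<le> k (Suc j)) \<and>
        E = (\<Union>j<J. {k j..k (Suc j)} \<times> {j}))"

definition hs_domain :: "(nat \<times> nat) set \<Rightarrow> bool" where
  "hs_domain E \<longleftrightarrow>
     (\<exists>Es :: nat \<Rightarrow> (nat \<times> nat) set. (\<forall>i. compact_hs_domain (Es i)) \<and>
        (\<forall>i. Es i \<subseteq> Es (Suc i)) \<and> E = (\<Union>i. Es i))"

definition bounded_complete_hs :: "(nat \<times> nat) set \<Rightarrow> (nat \<times> nat \<Rightarrow> 'v::metric_space) \<Rightarrow> bool" where
  "bounded_complete_hs E \<phi> \<longleftrightarrow> hs_domain E \<and> bounded (\<phi> ` E) \<and> infinite E"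

definition complete_k :: "(nat \<times> nat) set \<Rightarrow> bool" where
  "complete_k E \<longleftrightarrow> infinite (fst ` E)"

definition complete_j :: "(nat \<times> nat) set \<Rightarrow> bool" where
  "complete_j E \<longleftrightarrow> infinite (snd ` E)"

text \<open>\<open>jbar E k\<close> = least j with (k+1, j) in E; \<open>kbar E j\<close> = least k with (k, j+1) in E.
  (Only used when these sets are nonempty.)\<close>
definition jbar :: "(nat \<times> nat) set \<Rightarrow> nat \<Rightarrow> nat" where
  "jbar E k = (LEAST j. (Suc k, j) \<in> E)"

definition kbar :: "(nat \<times> nat) set \<Rightarrow> nat \<Rightarrow> nat" where
  "kbar E j = (LEAST k. (k, Suc j) \<in> E)"

definition seq_limsup :: "(nat \<Rightarrow> 'v::metric_space) \<Rightarrow> 'v set" where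
  "seq_limsup x = {y. \<exists>r. strict_mono r \<and> (x \<circ> r) \<longlonglongrightarrow> y}"

text \<open>Step sizes are indexed from 1: \<open>h (Suc i)\<close> is h_{i+1}; \<open>h 0\<close> is irrelevant.\<close>
definition admissible :: "(nat \<Rightarrow> real) \<Rightarrow> bool" where
  "admissible h \<longleftrightarrow> (\<forall>k\<ge>1. h k > 0) \<and> h \<longlonglongrightarrow> 0 \<and>
     filterlim (\<lambda>n. \<Sum>i<n. h (Suc i)) at_top sequentially"

definition tau :: "(nat \<Rightarrow> real) \<Rightarrow> nat \<Rightarrow> real" where
  "tau h k = (\<Sum>i<k. h (Suc i))"

definition mfun :: "(nat \<Rightarrow> real) \<Rightarrow> real \<Rightarrow> nat" where
  "mfun h t = (GREATEST k. tau h k \<le> t)"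

definition fhat :: "(nat \<times> nat) set \<Rightarrow> (nat \<times> nat \<Rightarrow> 'v::real_normed_vector) \<Rightarrow> (nat \<Rightarrow> real) \<Rightarrow> nat \<Rightarrow> 'v" where
  "fhat E \<phi> h k = (1 / h (Suc k)) *\<^sub>R (\<phi> (Suc k, jbar E k) - \<phi> (k, jbar E k))"
  \<comment> \<open>this is \<open>\<hat>f_{k+1}\<close>\<close>

text \<open>\<open>lim_{n} sup_{n+1 \<le> k \<le> m(tau_n + T)} |\<Sum>_{i=n}^{k-1} h_{i+1}(fhat_{i+1} - f_i)| = 0\<close>,
  with the (nonnegative) sup over a finite, possibly empty, index set written out.\<close>
definition asym_pseudo_traj :: "(nat \<Rightarrow> real) \<Rightarrow> (nat \<Rightarrow> 'v::real_normed_vector) \<Rightarrow> (nat \<Rightarrow> 'v) \<Rightarrow> bool" where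
  "asym_pseudo_traj h fh f \<longleftrightarrow>
     (\<forall>T>0. \<forall>e>0. \<exists>N. \<forall>n\<ge>N. \<forall>k. n + 1 \<le> k \<and> k \<le> mfun h (tau h n + T) \<longrightarrow>
        norm (\<Sum>i=n..<k. h (Suc i) *\<^sub>R (fh i - f i)) \<le> e)"

definition asymptotic_simulation ::
  "'v::euclidean_space set \<Rightarrow> ('v \<Rightarrow> 'v set) \<Rightarrow> 'v set \<Rightarrow> ('v \<Rightarrow> 'v set) \<Rightarrow>
   (nat \<times> nat) set \<Rightarrow> (nat \<times> nat \<Rightarrow> 'v) \<Rightarrow> (nat \<Rightarrow> real) \<Rightarrow> bool" where
  "asymptotic_simulation C F D G E \<phi> h \<longleftrightarrow>
     bounded_complete_hs E \<phi> \<and> admissible h \<and>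
     (complete_k E \<longrightarrow>
        (\<exists>f :: nat \<Rightarrow> 'v. bounded (range f) \<and>
           seq_limsup (\<lambda>k. (\<phi> (k, jbar E k), f k)) \<subseteq> gph_restr C F \<and>
           asym_pseudo_traj h (fhat E \<phi> h) f)) \<and>
     (complete_j E \<longrightarrow>
        seq_limsup (\<lambda>j. (\<phi> (kbar E j, j), \<phi> (kbar E j, Suc j))) \<subseteq> gph_restr D G)"

definition F1 :: "('a \<times> 'b \<Rightarrow> 'a set) \<Rightarrow> ('a \<times> 'b \<Rightarrow> 'b set) \<Rightarrow> 'a \<times> 'b \<Rightarrow> ('a \<times> 'b) set" where
  "F1 Fs Ff x = Fs x \<times> Ff x"

definition tt_admissible :: "(nat \<Rightarrow> real) \<Rightarrow> (nat \<Rightarrow> real) \<Rightarrow> bool" where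
  "tt_admissible hs hf \<longleftrightarrow> admissible hs \<and> admissible hf \<and> (\<lambda>k. hs k / hf k) \<longlonglongrightarrow> 0"

definition tt_asymptotic_simulation ::
  "('a::euclidean_space \<times> 'b::euclidean_space) set \<Rightarrow> ('a \<times> 'b \<Rightarrow> 'a set) \<Rightarrow> ('a \<times> 'b \<Rightarrow> 'b set) \<Rightarrow>
   ('a \<times> 'b) set \<Rightarrow> ('a \<times> 'b \<Rightarrow> ('a \<times> 'b) set) \<Rightarrow>
   (nat \<times> nat) set \<Rightarrow> (nat \<times> nat \<Rightarrow> 'a \<times> 'b) \<Rightarrow> (nat \<Rightarrow> real) \<Rightarrow> (nat \<Rightarrow> real) \<Rightarrow> bool" where
  "tt_asymptotic_simulation C Fs Ff D G E \<Phi> hs hf \<longleftrightarrow>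
     bounded_complete_hs E \<Phi> \<and> tt_admissible hs hf \<and>
     (complete_k E \<longrightarrow>
        (\<exists>f :: nat \<Rightarrow> 'a \<times> 'b. bounded (range f) \<and>
           seq_limsup (\<lambda>k. (\<Phi> (k, jbar E k), f k)) \<subseteq> gph_restr C (F1 Fs Ff) \<and>
           asym_pseudo_traj hs (fhat E (\<lambda>p. fst (\<Phi> p)) hs) (\<lambda>k. fst (f k)) \<and>
           asym_pseudo_traj hf (fhat E (\<lambda>p. snd (\<Phi> p)) hf) (\<lambda>k. snd (f k)))) \<and>
     (complete_j E \<longrightarrow>
        seq_limsup (\<lambda>j. (\<Phi> (kbar E j, j), \<Phi> (kbar E j, Suc j))) \<subseteq> gph_restr D G)"

end

theory Submission
  imports Defs "HOL-Library.Product_Plus"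
begin

text \<open>Seen on the fast timescale, the slow component is at rest: since
  \<open>hs k / hf k \<longrightarrow> 0\<close>, a window of fast time \<open>T\<close> has slow length tending to \<open>0\<close>.
  On such a window the slow part of the interpolation error,
  \<open>\<Sum> hf (fhat - 0) = \<Sum> hs fhat_s\<close>, splits into the slow pseudo-trajectory error
  (over a window of slow length at most 1) and \<open>\<Sum> hs f_s\<close>, which is bounded by
  \<open>sup |f_s|\<close> times the slow length; both vanish.
  For the graph condition, any limit point of \<open>(\<Phi>, 0, f_f)\<close> is reached along a
  subsequence on which the bounded slow velocity \<open>f_s\<close> also converges; the resulting
  limit point of \<open>(\<Phi>, f)\<close> lies in the graph of \<open>Fs \<times> Ff\<close> over \<open>C\<close>.\<close>

lemma admissible_pos:
  assumes "admissible h"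
  shows "h (Suc i) > 0"
  using assms unfolding admissible_def by simp

lemma tau_split:
  assumes "m \<le> k"
  shows "tau h k = tau h m + (\<Sum>i=m..<k. h (Suc i))"
  unfolding tau_def using assms
  by (metis atLeast0LessThan le0 sum.atLeastLessThan_concat)

lemma tau_nonneg:
  assumes "admissible h"
  shows "0 \<le> tau h n"
  unfolding tau_def using admissible_pos[OF assms] by (simp add: sum_nonneg less_imp_le)

lemma tau_mono:
  assumes "admissible h" "m \<le> k"
  shows "tau h m \<le> tau h k"
proof -
  have "0 \<le> (\<Sum>i=m..<k. h (Suc i))"
    using admissible_pos[OF assms(1)] by (simp add: sum_nonneg less_imp_le)
  then show ?thesis using tau_split[OF assms(2)] by simp
qed

lemma
  assumes "admissible h" "0 \<le> t"
  shows tau_mfun_le: "tau h (mfun h t) \<le> t"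
    and le_mfun: "tau h k \<le> t \<Longrightarrow> k \<le> mfun h t"
proof -
  have "filterlim (tau h) at_top sequentially"
    using assms(1) unfolding admissible_def tau_def by (simp add: fun_eq_iff)
  then obtain K where K: "\<And>n. n \<ge> K \<Longrightarrow> t < tau h n"
    by (auto simp: filterlim_at_top_dense eventually_sequentially)
  have bound: "k \<le> K" if "tau h k \<le> t" for k
    using K[of k] that by fastforce
  have "tau h 0 \<le> t" using assms(2) by (simp add: tau_def)
  then show "tau h (mfun h t) \<le> t"
    unfolding mfun_def by (rule GreatestI_nat[where P = "\<lambda>k. tau h k \<le> t", OF _ bound])
  show "k \<le> mfun h t" if "tau h k \<le> t"
    unfolding mfun_def by (rule Greatest_le_nat[where P = "\<lambda>k. tau h k \<le> t", OF that bound])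
qed

lemma window_length_le:
  assumes "admissible h" "0 \<le> T" "n \<le> k" "k \<le> mfun h (tau h n + T)"
  shows "(\<Sum>i=n..<k. h (Suc i)) \<le> T"
proof -
  have "tau h k \<le> tau h (mfun h (tau h n + T))"
    using tau_mono[OF assms(1,4)] .
  also have "\<dots> \<le> tau h n + T"
    using tau_mfun_le[OF assms(1)] tau_nonneg[OF assms(1)] assms(2) by simp
  finally show ?thesis using tau_split[OF assms(3)] by simp
qed

lemma le_mfun_if_window_length_le:
  assumes "admissible h" "0 \<le> T" "n \<le> k" "(\<Sum>i=n..<k. h (Suc i)) \<le> T"
  shows "k \<le> mfun h (tau h n + T)"
  using le_mfun[OF assms(1)] tau_split[OF assms(3)] tau_nonneg[OF assms(1)] assms(2,4) by simp

lemma fast_window_slow_length_vanishes: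
  assumes "admissible hf" and ratio: "(\<lambda>k. hs k / hf k) \<longlonglongrightarrow> 0" and "T > 0" "\<epsilon> > 0"
  shows "\<exists>N. \<forall>n\<ge>N. \<forall>k. n \<le> k \<and> k \<le> mfun hf (tau hf n + T) \<longrightarrow> (\<Sum>i=n..<k. hs (Suc i)) \<le> \<epsilon>"
proof -
  obtain N where N: "\<And>i. i \<ge> N \<Longrightarrow> hs i / hf i < \<epsilon> / T"
    using order_tendstoD(2)[OF ratio, of "\<epsilon> / T"] \<open>T > 0\<close> \<open>\<epsilon> > 0\<close>
    by (auto simp: eventually_sequentially)
  have "(\<Sum>i=n..<k. hs (Suc i)) \<le> \<epsilon>" if "N \<le> n" "n \<le> k" "k \<le> mfun hf (tau hf n + T)" for n k
  proof -
    have "hs (Suc i) \<le> \<epsilon> / T * hf (Suc i)" if "i \<in> {n..<k}" for i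
      using N[of "Suc i"] \<open>N \<le> n\<close> that admissible_pos[OF \<open>admissible hf\<close>, of i]
      by (simp add: divide_less_eq)
    then have "(\<Sum>i=n..<k. hs (Suc i)) \<le> \<epsilon> / T * (\<Sum>i=n..<k. hf (Suc i))"
      unfolding sum_distrib_left by (rule sum_mono)
    also have "\<dots> \<le> \<epsilon> / T * T"
      using window_length_le[OF \<open>admissible hf\<close> _ that(2,3)] \<open>T > 0\<close> \<open>\<epsilon> > 0\<close>
      by (intro mult_left_mono) auto
    finally show ?thesis using \<open>T > 0\<close> by simp
  qed
  then show ?thesis by blast
qed

lemma asym_pseudo_traj_Pair:
  fixes fh f :: "nat \<Rightarrow> 'a::real_normed_vector \<times> 'b::real_normed_vector"
  assumes fst: "asym_pseudo_traj h (\<lambda>i. fst (fh i)) (\<lambda>i. fst (f i))"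
    and snd: "asym_pseudo_traj h (\<lambda>i. snd (fh i)) (\<lambda>i. snd (f i))"
  shows "asym_pseudo_traj h fh f"
  unfolding asym_pseudo_traj_def
proof (intro allI impI)
  fix T e :: real assume "T > 0" "e > 0"
  then obtain N1 N2 where
    N1: "\<And>n k. n \<ge> N1 \<Longrightarrow> n + 1 \<le> k \<and> k \<le> mfun h (tau h n + T) \<Longrightarrow>
      norm (\<Sum>i=n..<k. h (Suc i) *\<^sub>R (fst (fh i) - fst (f i))) \<le> e / 2" and
    N2: "\<And>n k. n \<ge> N2 \<Longrightarrow> n + 1 \<le> k \<and> k \<le> mfun h (tau h n + T) \<Longrightarrow>
      norm (\<Sum>i=n..<k. h (Suc i) *\<^sub>R (snd (fh i) - snd (f i))) \<le> e / 2"
    using fst snd unfolding asym_pseudo_traj_def by (meson half_gt_zero)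
  have "norm (\<Sum>i=n..<k. h (Suc i) *\<^sub>R (fh i - f i)) \<le> e"
    if "max N1 N2 \<le> n" "n + 1 \<le> k \<and> k \<le> mfun h (tau h n + T)" for n k
  proof -
    have "(\<Sum>i=n..<k. h (Suc i) *\<^sub>R (fh i - f i))
        = (\<Sum>i=n..<k. h (Suc i) *\<^sub>R (fst (fh i) - fst (f i)),
           \<Sum>i=n..<k. h (Suc i) *\<^sub>R (snd (fh i) - snd (f i)))"
      by (simp add: prod_eq_iff fst_sum snd_sum)
    then have "norm (\<Sum>i=n..<k. h (Suc i) *\<^sub>R (fh i - f i))
        \<le> norm (\<Sum>i=n..<k. h (Suc i) *\<^sub>R (fst (fh i) - fst (f i)))
          + norm (\<Sum>i=n..<k. h (Suc i) *\<^sub>R (snd (fh i) - snd (f i)))"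
      by (simp add: norm_Pair_le)
    then show ?thesis using N1[of n k] N2[of n k] that by simp
  qed
  then show "\<exists>N. \<forall>n\<ge>N. \<forall>k. n + 1 \<le> k \<and> k \<le> mfun h (tau h n + T) \<longrightarrow>
      norm (\<Sum>i=n..<k. h (Suc i) *\<^sub>R (fh i - f i)) \<le> e"
    by blast
qed

lemma asym_pseudo_traj_slow_at_rest:
  fixes fh f g :: "nat \<Rightarrow> 'a::real_normed_vector"
  assumes hs: "admissible hs" and hf: "admissible hf"
    and ratio: "(\<lambda>k. hs k / hf k) \<longlonglongrightarrow> 0" and "bounded (range f)"
    and slow: "asym_pseudo_traj hs fh f"
    and rescale: "\<And>i. hf (Suc i) *\<^sub>R g i = hs (Suc i) *\<^sub>R fh i"
  shows "asym_pseudo_traj hf g (\<lambda>_. 0)"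
  unfolding asym_pseudo_traj_def
proof (intro allI impI)
  fix T e :: real assume "T > 0" "e > 0"
  obtain M where "M > 0" and M: "\<And>i. norm (f i) \<le> M"
    using \<open>bounded (range f)\<close> unfolding bounded_pos by auto
  define \<epsilon> where "\<epsilon> = min 1 (e / (2 * M))"
  have "\<epsilon> > 0" using \<open>e > 0\<close> \<open>M > 0\<close> by (simp add: \<epsilon>_def)
  obtain N1 where N1: "\<And>n k. n \<ge> N1 \<Longrightarrow> n \<le> k \<and> k \<le> mfun hf (tau hf n + T) \<Longrightarrow>
      (\<Sum>i=n..<k. hs (Suc i)) \<le> \<epsilon>"
    using fast_window_slow_length_vanishes[OF hf ratio \<open>T > 0\<close> \<open>\<epsilon> > 0\<close>] by blast
  obtain N2 where N2: "\<And>n k. n \<ge> N2 \<Longrightarrow> n + 1 \<le> k \<and> k \<le> mfun hs (tau hs n + 1) \<Longrightarrow>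
      norm (\<Sum>i=n..<k. hs (Suc i) *\<^sub>R (fh i - f i)) \<le> e / 2"
    using slow \<open>e > 0\<close> unfolding asym_pseudo_traj_def by (meson half_gt_zero zero_less_one)
  have "norm (\<Sum>i=n..<k. hf (Suc i) *\<^sub>R (g i - 0)) \<le> e"
    if n: "max N1 N2 \<le> n" and k: "n + 1 \<le> k \<and> k \<le> mfun hf (tau hf n + T)" for n k
  proof -
    have slow_length: "(\<Sum>i=n..<k. hs (Suc i)) \<le> \<epsilon>"
      using N1[of n k] n k by simp
    then have "k \<le> mfun hs (tau hs n + 1)"
      using le_mfun_if_window_length_le[OF hs, of 1 n k] k by (simp add: \<epsilon>_def)
    then have error: "norm (\<Sum>i=n..<k. hs (Suc i) *\<^sub>R (fh i - f i)) \<le> e / 2"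
      using N2[of n k] n k by simp
    have "norm (\<Sum>i=n..<k. hs (Suc i) *\<^sub>R f i) \<le> (\<Sum>i=n..<k. hs (Suc i) * M)"
      using admissible_pos[OF hs] M
      by (intro order.trans[OF norm_sum] sum_mono) (simp add: less_imp_le mult_left_mono)
    also have "\<dots> \<le> \<epsilon> * M"
      using slow_length \<open>M > 0\<close> by (simp add: sum_distrib_right[symmetric])
    also have "\<dots> \<le> e / 2"
      using \<open>M > 0\<close> by (simp add: \<epsilon>_def min_mult_distrib_right)
    finally have drift: "norm (\<Sum>i=n..<k. hs (Suc i) *\<^sub>R f i) \<le> e / 2" .
    have "(\<Sum>i=n..<k. hf (Suc i) *\<^sub>R (g i - 0))
        = (\<Sum>i=n..<k. hs (Suc i) *\<^sub>R (fh i - f i)) + (\<Sum>i=n..<k. hs (Suc i) *\<^sub>R f i)"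
      by (simp add: rescale scaleR_diff_right sum.distrib[symmetric])
    then show ?thesis
      using norm_triangle_le[OF add_mono[OF error drift]] by simp
  qed
  then show "\<exists>N. \<forall>n\<ge>N. \<forall>k. n + 1 \<le> k \<and> k \<le> mfun hf (tau hf n + T) \<longrightarrow>
      norm (\<Sum>i=n..<k. hf (Suc i) *\<^sub>R (g i - 0)) \<le> e"
    by blast
qed

lemma scaleR_fhat:
  assumes "h (Suc k) \<noteq> 0"
  shows "h (Suc k) *\<^sub>R fhat E \<phi> h k = \<phi> (Suc k, jbar E k) - \<phi> (k, jbar E k)"
  using assms by (simp add: fhat_def)

lemma fst_fhat: "fst (fhat E \<Phi> h k) = fhat E (\<lambda>p. fst (\<Phi> p)) h k"
  by (simp add: fhat_def)

lemma snd_fhat: "snd (fhat E \<Phi> h k) = fhat E (\<lambda>p. snd (\<Phi> p)) h k"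
  by (simp add: fhat_def)

lemma seq_limsup_zero_fst_subset:
  fixes x :: "nat \<Rightarrow> 'c::metric_space"
    and f :: "nat \<Rightarrow> 'a::{heine_borel,real_normed_vector} \<times> 'b::metric_space"
  assumes "bounded (range (\<lambda>k. fst (f k)))"
    and limsup: "seq_limsup (\<lambda>k. (x k, f k)) \<subseteq> gph_restr C (\<lambda>z. A z \<times> B z)"
  shows "seq_limsup (\<lambda>k. (x k, (0, snd (f k)))) \<subseteq> gph_restr C (\<lambda>z. {0} \<times> B z)"
proof
  fix p assume "p \<in> seq_limsup (\<lambda>k. (x k, (0, snd (f k))))"
  then obtain r where "strict_mono r" and lim: "(\<lambda>i. (x (r i), (0, snd (f (r i))))) \<longlonglongrightarrow> p"
    unfolding seq_limsup_def o_def by blast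
  have "bounded (range (\<lambda>i. fst (f (r i))))"
    using \<open>bounded (range (\<lambda>k. fst (f k)))\<close> by (rule bounded_subset) auto
  then obtain y r' where "strict_mono r'" and lim_fst: "(\<lambda>i. fst (f (r (r' i)))) \<longlonglongrightarrow> y"
    using bounded_imp_convergent_subsequence unfolding o_def by blast
  have lim': "(\<lambda>i. (x (r (r' i)), (0, snd (f (r (r' i)))))) \<longlonglongrightarrow> p"
    using LIMSEQ_subseq_LIMSEQ[OF lim \<open>strict_mono r'\<close>] by (simp add: o_def)
  have "(\<lambda>i. 0) \<longlonglongrightarrow> fst (snd p)"
    using tendsto_fst[OF tendsto_snd[OF lim']] by simp
  then have "p = (fst p, 0, snd (snd p))"
    using LIMSEQ_unique[OF _ tendsto_const] by (simp add: prod_eq_iff)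
  have "(\<lambda>i. (x (r (r' i)), fst (f (r (r' i))), snd (f (r (r' i))))) \<longlonglongrightarrow> (fst p, y, snd (snd p))"
    using tendsto_fst[OF lim'] lim_fst tendsto_snd[OF tendsto_snd[OF lim']] by (intro tendsto_Pair) simp_all
  moreover have "strict_mono (r \<circ> r')"
    using \<open>strict_mono r\<close> \<open>strict_mono r'\<close> by (rule strict_mono_o)
  ultimately have "(fst p, y, snd (snd p)) \<in> seq_limsup (\<lambda>k. (x k, f k))"
    unfolding seq_limsup_def o_def by fastforce
  with limsup have "fst p \<in> C" "snd (snd p) \<in> B (fst p)"
    by (auto simp: gph_restr_def)
  with \<open>p = (fst p, 0, snd (snd p))\<close> show "p \<in> gph_restr C (\<lambda>z. {0} \<times> B z)"
    by (auto simp: gph_restr_def)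
qed

lemma boundary_layer_velocity:
  fixes \<Phi> :: "nat \<times> nat \<Rightarrow> 'a::{heine_borel,real_normed_vector} \<times> 'b::real_normed_vector"
    and f :: "nat \<Rightarrow> 'a \<times> 'b"
  assumes "tt_admissible hs hf" and "bounded (range f)"
    and limsup: "seq_limsup (\<lambda>k. (\<Phi> (k, jbar E k), f k)) \<subseteq> gph_restr C (F1 Fs Ff)"
    and slow: "asym_pseudo_traj hs (fhat E (\<lambda>p. fst (\<Phi> p)) hs) (\<lambda>k. fst (f k))"
    and fast: "asym_pseudo_traj hf (fhat E (\<lambda>p. snd (\<Phi> p)) hf) (\<lambda>k. snd (f k))"
  shows "bounded (range (\<lambda>k. (0::'a, snd (f k))))"
    and "seq_limsup (\<lambda>k. (\<Phi> (k, jbar E k), (0, snd (f k)))) \<subseteq> gph_restr C (\<lambda>x. {0} \<times> Ff x)"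
    and "asym_pseudo_traj hf (fhat E \<Phi> hf) (\<lambda>k. (0, snd (f k)))"
proof -
  have hs: "admissible hs" and hf: "admissible hf" and ratio: "(\<lambda>k. hs k / hf k) \<longlonglongrightarrow> 0"
    using \<open>tt_admissible hs hf\<close> unfolding tt_admissible_def by simp_all
  have bounded_fst: "bounded (range (\<lambda>k. fst (f k)))"
    using bounded_fst[OF \<open>bounded (range f)\<close>] by (simp add: image_image)
  have "bounded ({0::'a} \<times> snd ` range f)"
    using \<open>bounded (range f)\<close> by (intro bounded_Times bounded_snd) auto
  then show "bounded (range (\<lambda>k. (0::'a, snd (f k))))"
    by (rule bounded_subset) auto
  show "seq_limsup (\<lambda>k. (\<Phi> (k, jbar E k), (0, snd (f k)))) \<subseteq> gph_restr C (\<lambda>x. {0} \<times> Ff x)"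
    using seq_limsup_zero_fst_subset[OF bounded_fst limsup[unfolded F1_def]] .
  have "hf (Suc i) *\<^sub>R fst (fhat E \<Phi> hf i) = hs (Suc i) *\<^sub>R fhat E (\<lambda>p. fst (\<Phi> p)) hs i" for i
    using admissible_pos[OF hs, of i] admissible_pos[OF hf, of i]
    by (simp add: fst_fhat scaleR_fhat)
  then have "asym_pseudo_traj hf (\<lambda>k. fst (fhat E \<Phi> hf k)) (\<lambda>k. fst (0::'a, snd (f k)))"
    using asym_pseudo_traj_slow_at_rest[OF hs hf ratio bounded_fst slow] by simp
  moreover have "asym_pseudo_traj hf (\<lambda>k. snd (fhat E \<Phi> hf k)) (\<lambda>k. snd (0::'a, snd (f k)))"
    using fast by (simp add: snd_fhat)
  ultimately show "asym_pseudo_traj hf (fhat E \<Phi> hf) (\<lambda>k. (0, snd (f k)))"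
    by (rule asym_pseudo_traj_Pair)
qed

theorem theorem1:
  fixes C D :: "('a::euclidean_space \<times> 'b::euclidean_space) set"
    and Fs :: "'a \<times> 'b \<Rightarrow> 'a set" and Ff :: "'a \<times> 'b \<Rightarrow> 'b set"
    and G :: "'a \<times> 'b \<Rightarrow> ('a \<times> 'b) set"
    and E :: "(nat \<times> nat) set" and \<Phi> :: "nat \<times> nat \<Rightarrow> 'a \<times> 'b"
    and hs hf :: "nat \<Rightarrow> real"
  assumes "hybrid_basic_conditions C (F1 Fs Ff) D G"
    and "tt_asymptotic_simulation C Fs Ff D G E \<Phi> hs hf"
  shows "asymptotic_simulation C (\<lambda>x. {0} \<times> Ff x) D G E \<Phi> hf"
proof -
  have tt: "tt_admissible hs hf"
    using assms(2) unfolding tt_asymptotic_simulation_def by simp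
  have "\<exists>g. bounded (range g) \<and>
      seq_limsup (\<lambda>k. (\<Phi> (k, jbar E k), g k)) \<subseteq> gph_restr C (\<lambda>x. {0} \<times> Ff x) \<and>
      asym_pseudo_traj hf (fhat E \<Phi> hf) g" if "complete_k E"
  proof -
    obtain f :: "nat \<Rightarrow> 'a \<times> 'b" where "bounded (range f)"
      and "seq_limsup (\<lambda>k. (\<Phi> (k, jbar E k), f k)) \<subseteq> gph_restr C (F1 Fs Ff)"
      and "asym_pseudo_traj hs (fhat E (\<lambda>p. fst (\<Phi> p)) hs) (\<lambda>k. fst (f k))"
      and "asym_pseudo_traj hf (fhat E (\<lambda>p. snd (\<Phi> p)) hf) (\<lambda>k. snd (f k))"
      using assms(2) \<open>complete_k E\<close> unfolding tt_asymptotic_simulation_def by blast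
    from boundary_layer_velocity[OF tt this] show ?thesis by blast
  qed
  then show ?thesis
    using assms(2) tt unfolding asymptotic_simulation_def tt_asymptotic_simulation_def tt_admissible_def
    by simp
qed

end
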